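(* Let $b_1 < b_2$ be real numbers and $h>0$, and let $\mathcal{B}\subset\mathbb{C}$ be the closed rectangle with vertices $b_1, b_2, \beta_1 = b_1 - \mathrm{i}h, \beta_2 = b_2 - \mathrm{i}h$ (so $\operatorname{Im}(b_j)=0$ and $\operatorname{Im}(\beta_j)=-h<0$). Fix $z\in\mathbb{C}$ and, for $p\in\mathbb{C}$, let $R_p(\lambda) = 1-(\lambda-z)p$. Then: (i) for every $p\in\mathbb{C}$, $\max_{\lambda\in\mathcal{B}}|R_p(\lambda)| = \max_{\lambda\in\{b_1,b_2,\beta_1,\beta_2\}}|R_p(\lambda)|$; consequently \[ \min_{p\in\mathbb{C}}\max_{\lambda\in\mathcal{B}}|R_p(\lambda)|=\min_{p\in\mathbb{C}}\max_{\lambda\in\{b_1, b_2, \beta_1, \beta_2\}}|R_p(\lambda)|. \] (ii) If moreover $\operatorname{Im}(z)\notin[-h, 0]$ and $z$ lies in the interior of the circumcircle of $\mathcal{B}$, define \[ (\alpha_1, \alpha_2) = \begin{cases} (b_1-z,\ b_2-z) & \text{if } \operatorname{Im}(z)>0,\\ (\beta_1-z,\ \beta_2-z) & \text{otherwise}.\end{cases} \] Then \[ \min_{p\in\mathbb{C}}\max_{\lambda\in\mathcal{B}}|R_p(\lambda)| = \frac{|\alpha_1 - \alpha_2|}{|\alpha_1|+|\alpha_2|}, \] and this minimum is attained at $p^\ast=\dfrac{|\alpha_1|/\alpha_1 + |\alpha_2|/\alpha_2}{|\alpha_1|+|\alpha_2|}$.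
   Context: This concerns the stationary Richardson iteration $y^{(m+1)} = y^{(m)} + p\,(f-(A-zI)y^{(m)})$ for a shifted system $(A-zI)y=f$ whose spectrum lies in $\mathcal{B}$; $R_p$ is its residual polynomial. *)

theory Defs
  imports "HOL-Analysis.Analysis"
begin

definition resid_poly :: "complex \<Rightarrow> complex \<Rightarrow> complex \<Rightarrow> complex" where
  "resid_poly z p l = 1 - (l - z) * p"

definition rect :: "real \<Rightarrow> real \<Rightarrow> real \<Rightarrow> complex set" where
  "rect b1 b2 h = {l. b1 \<le> Re l \<and> Re l \<le> b2 \<and> - h \<le> Im l \<and> Im l \<le> 0}"

definition corners :: "real \<Rightarrow> real \<Rightarrow> real \<Rightarrow> complex set" where
  "corners b1 b2 h = {complex_of_real b1, complex_of_real b2,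
                      complex_of_real b1 - \<i> * complex_of_real h,
                      complex_of_real b2 - \<i> * complex_of_real h}"

text \<open>Maximum of |R_p| over a set (supremum; for compact sets it is attained).\<close>
definition max_resid :: "complex \<Rightarrow> complex set \<Rightarrow> complex \<Rightarrow> real" where
  "max_resid z S p = (SUP l\<in>S. cmod (resid_poly z p l))"

definition circum_interior :: "real \<Rightarrow> real \<Rightarrow> real \<Rightarrow> complex set" where
  "circum_interior b1 b2 h =
     ball (Complex ((b1 + b2) / 2) (- h / 2)) (sqrt ((b2 - b1)^2 + h^2) / 2)"

end

theory Submission
  imports Defs
begin

text \<open>
  The modulus of the residual polynomial is the norm of an affine function of \<open>\<lambda>\<close>, hence
  convex, so its maximum over the rectangle, the convex hull of the four corners, is attained at
  a corner.

  For the minimax problem, the identity \<open>\<alpha>\<^sub>2 - \<alpha>\<^sub>1 = \<alpha>\<^sub>2 (1 - \<alpha>\<^sub>1 p) - \<alpha>\<^sub>1 (1 - \<alpha>\<^sub>2 p)\<close>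
  shows that the residual at one of the two corners nearest to \<open>z\<close> is at least
  \<open>|\<alpha>\<^sub>1 - \<alpha>\<^sub>2| / (|\<alpha>\<^sub>1| + |\<alpha>\<^sub>2|)\<close> for every \<open>p\<close>, and \<open>p\<^sup>*\<close> makes both of these residuals equal
  to that bound. It remains to see that \<open>p\<^sup>*\<close> does no worse at the two far corners. Moving a
  point \<open>w\<close> with \<open>Im w = t\<close> by the height \<open>h\<close> of the rectangle away from \<open>z\<close> changes
  \<open>|1 - w p\<^sup>*|\<^sup>2\<close> by \<open>h ((h + 2|t|) |p\<^sup>*|\<^sup>2 - 2|t| / (|\<alpha>\<^sub>1| |\<alpha>\<^sub>2|))\<close>, and this is \<open>\<le> 0\<close>
  because \<open>z\<close> lies inside the circumcircle.
\<close>

lemma convex_on_norm_resid_poly: "convex_on UNIV (\<lambda>l. cmod (resid_poly z p l))"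
proof (rule convex_onI)
  fix t :: real and x y
  assume "0 < t" "t < 1"
  have "resid_poly z p ((1 - t) *\<^sub>R x + t *\<^sub>R y) = (1 - t) *\<^sub>R resid_poly z p x + t *\<^sub>R resid_poly z p y"
    by (simp add: resid_poly_def scaleR_conv_of_real algebra_simps)
  with \<open>0 < t\<close> \<open>t < 1\<close> show "cmod (resid_poly z p ((1 - t) *\<^sub>R x + t *\<^sub>R y))
      \<le> (1 - t) * cmod (resid_poly z p x) + t * cmod (resid_poly z p y)"
    by (metis norm_triangle_le norm_scaleR abs_of_pos diff_gt_0_iff_gt order.refl add_mono)
qed simp

lemma rect_subset_convex_hull_corners: "rect b1 b2 h \<subseteq> convex hull corners b1 b2 h"
proof
  fix l assume l: "l \<in> rect b1 b2 h"
  let ?H = "convex hull corners b1 b2 h"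
  have segment: "closed_segment a b \<subseteq> ?H" if "a \<in> ?H" "b \<in> ?H" for a b
    using that convex_contains_segment convex_convex_hull by blast
  have "complex_of_real b1 \<in> ?H" "complex_of_real b2 \<in> ?H"
    "of_real b1 - \<i> * of_real h \<in> ?H" "of_real b2 - \<i> * of_real h \<in> ?H"
    by (auto intro: hull_inc simp: corners_def)
  moreover have "Complex (Re l) 0 \<in> closed_segment (of_real b1) (of_real b2)"
    and "Complex (Re l) (- h) \<in> closed_segment (of_real b1 - \<i> * of_real h) (of_real b2 - \<i> * of_real h)"
    using l by (auto simp: rect_def closed_segment_same_Im closed_segment_eq_real_ivl)
  ultimately have "Complex (Re l) 0 \<in> ?H" "Complex (Re l) (- h) \<in> ?H"
    using segment by blast+
  moreover have "l \<in> closed_segment (Complex (Re l) 0) (Complex (Re l) (- h))"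
    using l by (auto simp: rect_def closed_segment_same_Re closed_segment_eq_real_ivl)
  ultimately show "l \<in> ?H"
    using segment by blast
qed

lemma corners_subset_rect: "b1 \<le> b2 \<Longrightarrow> 0 \<le> h \<Longrightarrow> corners b1 b2 h \<subseteq> rect b1 b2 h"
  by (auto simp: corners_def rect_def)

lemma max_resid_rect_eq_Max_corners:
  assumes "b1 \<le> b2" "0 \<le> h"
  shows "max_resid z (rect b1 b2 h) p = Max ((\<lambda>l. cmod (resid_poly z p l)) ` corners b1 b2 h)"
  unfolding max_resid_def
proof (rule cSup_eq_maximum)
  let ?f = "\<lambda>l. cmod (resid_poly z p l)"
  have fin: "finite (?f ` corners b1 b2 h)" "?f ` corners b1 b2 h \<noteq> {}"
    by (auto simp: corners_def)
  then show "Max (?f ` corners b1 b2 h) \<in> ?f ` rect b1 b2 h"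
    using Max_in corners_subset_rect[OF assms] by blast
  have "convex_on (convex hull corners b1 b2 h) ?f"
    by (rule convex_on_subset[OF convex_on_norm_resid_poly]) auto
  then have "\<forall>l \<in> convex hull corners b1 b2 h. ?f l \<le> Max (?f ` corners b1 b2 h)"
    by (rule convex_on_convex_hull_bound) (simp add: fin)
  then show "\<And>x. x \<in> ?f ` rect b1 b2 h \<Longrightarrow> x \<le> Max (?f ` corners b1 b2 h)"
    using rect_subset_convex_hull_corners by blast
qed

lemma max_resid_corners_eq_Max: "max_resid z (corners b1 b2 h) p = Max ((\<lambda>l. cmod (resid_poly z p l)) ` corners b1 b2 h)"
  unfolding max_resid_def by (rule cSup_eq_Max) (auto simp: corners_def)

definition pstar :: "complex \<Rightarrow> complex \<Rightarrow> complex" where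
  "pstar a1 a2 = (of_real (cmod a1) / a1 + of_real (cmod a2) / a2) / of_real (cmod a1 + cmod a2)"

lemma pstar_commute: "pstar a1 a2 = pstar a2 a1"
  by (simp add: pstar_def add.commute)

lemma max_norm_one_minus_mult_ge:
  fixes a1 a2 p :: complex
  shows "cmod (a1 - a2) / (cmod a1 + cmod a2) \<le> max (cmod (1 - a1 * p)) (cmod (1 - a2 * p))"
proof -
  let ?m = "max (cmod (1 - a1 * p)) (cmod (1 - a2 * p))"
  have "a2 - a1 = a2 * (1 - a1 * p) - a1 * (1 - a2 * p)"
    by (simp add: algebra_simps)
  then have "cmod (a1 - a2) \<le> cmod a2 * cmod (1 - a1 * p) + cmod a1 * cmod (1 - a2 * p)"
    by (metis norm_minus_commute norm_mult norm_triangle_ineq4)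
  also have "\<dots> \<le> cmod a2 * ?m + cmod a1 * ?m"
    by (intro add_mono mult_left_mono) auto
  finally have "cmod (a1 - a2) \<le> (cmod a1 + cmod a2) * ?m"
    by (simp add: algebra_simps)
  then show ?thesis
  proof (cases "cmod a1 + cmod a2 = 0")
    case False
    then have "0 < cmod a1 + cmod a2"
      using norm_ge_zero[of a1] norm_ge_zero[of a2] by linarith
    with \<open>cmod (a1 - a2) \<le> (cmod a1 + cmod a2) * ?m\<close> show ?thesis
      by (simp add: pos_divide_le_eq mult.commute)
  qed simp
qed

lemma norm_one_minus_mult_pstar:
  assumes "a1 \<noteq> 0" "a2 \<noteq> 0"
  shows "cmod (1 - a1 * pstar a1 a2) = cmod (a1 - a2) / (cmod a1 + cmod a2)"
proof -
  have S: "cmod a1 + cmod a2 > 0"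
    using assms by (simp add: add_pos_pos)
  then have "1 - a1 * pstar a1 a2 = of_real (cmod a2) * (a2 - a1) / (a2 * of_real (cmod a1 + cmod a2))"
    using assms unfolding pstar_def by (simp add: field_simps del: of_real_add) (simp add: algebra_simps)
  then show ?thesis
    using assms S by (simp add: norm_mult norm_divide norm_minus_commute del: of_real_add)
qed

lemma pstar_eq_cnj:
  assumes "a1 \<noteq> 0" "a2 \<noteq> 0"
  shows "pstar a1 a2 = (cnj a1 / of_real (cmod a1) + cnj a2 / of_real (cmod a2)) / of_real (cmod a1 + cmod a2)"
proof -
  have "of_real (cmod a) / a = cnj a / of_real (cmod a)" if "a \<noteq> 0" for a :: complex
    using that by (simp add: field_simps flip: complex_norm_square of_real_mult) (simp add: power2_eq_square)
  then show ?thesis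
    using assms by (simp add: pstar_def)
qed

lemma Im_pstar:
  assumes "a1 \<noteq> 0" "a2 \<noteq> 0" "Im a1 = t" "Im a2 = t"
  shows "Im (pstar a1 a2) = - t / (cmod a1 * cmod a2)"
proof -
  have r: "cmod a1 > 0" "cmod a2 > 0"
    using assms by auto
  have "Im (cnj a1 / of_real (cmod a1) + cnj a2 / of_real (cmod a2))
      = - t * (cmod a1 + cmod a2) / (cmod a1 * cmod a2)"
    using assms r by (simp add: Im_divide_of_real field_simps)
  then show ?thesis
    using add_pos_pos[OF r] by (simp add: pstar_eq_cnj[OF assms(1,2)] Im_divide_of_real del: of_real_add)
qed

lemma norm_pstar_squared:
  assumes "a1 \<noteq> 0" "a2 \<noteq> 0"
  shows "(cmod (pstar a1 a2))\<^sup>2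
           = 2 * (cmod a1 * cmod a2 + Re (a1 * cnj a2)) / (cmod a1 * cmod a2 * (cmod a1 + cmod a2)\<^sup>2)"
proof -
  define u where "u = cnj a1 / of_real (cmod a1) + cnj a2 / of_real (cmod a2)"
  define S where "S = cmod a1 + cmod a2"
  define T where "T = cmod a1 * cmod a2"
  have r: "cmod a1 > 0" "cmod a2 > 0"
    using assms by auto
  then have "S > 0" "T > 0"
    unfolding S_def T_def by (fact add_pos_pos mult_pos_pos)+
  have unit: "(Re a / cmod a)\<^sup>2 + (Im a / cmod a)\<^sup>2 = 1" if "a \<noteq> 0" for a
    using that by (simp add: power_divide flip: add_divide_distrib cmod_power2)
  have "(cmod u)\<^sup>2
      = ((Re a1 / cmod a1)\<^sup>2 + (Im a1 / cmod a1)\<^sup>2) + ((Re a2 / cmod a2)\<^sup>2 + (Im a2 / cmod a2)\<^sup>2)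
        + 2 * (Re a1 * Re a2 + Im a1 * Im a2) / T"
    using r unfolding u_def T_def cmod_power2 by (simp add: power2_eq_square field_simps)
  also have "\<dots> = 2 + 2 * Re (a1 * cnj a2) / T"
    using assms by (simp add: unit)
  finally have u: "(cmod u)\<^sup>2 = 2 + 2 * Re (a1 * cnj a2) / T" .
  have p: "cmod (pstar a1 a2) = cmod u / S"
    using r by (simp add: pstar_eq_cnj[OF assms] u_def S_def norm_divide del: of_real_add)
  show ?thesis
    unfolding S_def[symmetric] T_def[symmetric] p power_divide u
    using \<open>S > 0\<close> \<open>T > 0\<close> by (simp add: field_simps)
qed

lemma norm_one_minus_vertical_shift_squared:
  "(cmod (1 - (w + \<i> * of_real e) * p))\<^sup>2
     = (cmod (1 - w * p))\<^sup>2 + e * (e * (cmod p)\<^sup>2 + 2 * Im p + 2 * (cmod p)\<^sup>2 * Im w)"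
  unfolding cmod_power2 by (simp add: power2_eq_square algebra_simps)

text \<open>For \<open>\<alpha>\<^sub>k = x\<^sub>k + i t\<close> and \<open>r\<^sub>k = |\<alpha>\<^sub>k|\<close> the third hypothesis is the circumcircle condition,
  and the conclusion is what bounds \<open>|p\<^sup>*|\<^sup>2\<close> at the far corners.\<close>

lemma circumcircle_inequality:
  fixes x1 x2 t h r1 r2 :: real
  assumes "t \<noteq> 0" "0 \<le> h" "x1 * x2 + t\<^sup>2 + h * \<bar>t\<bar> < 0"
    and "0 \<le> r1" "0 \<le> r2" "r1\<^sup>2 = x1\<^sup>2 + t\<^sup>2" "r2\<^sup>2 = x2\<^sup>2 + t\<^sup>2"
  shows "(h + 2 * \<bar>t\<bar>) * (r1 * r2 + (x1 * x2 + t\<^sup>2)) \<le> \<bar>t\<bar> * (r1 + r2)\<^sup>2"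
proof -
  define T where "T = r1 * r2"
  define c where "c = x1 * x2 + t\<^sup>2"
  have "T \<ge> 0"
    using assms by (simp add: T_def)
  have diff_squares: "T\<^sup>2 - c\<^sup>2 = t\<^sup>2 * (x1 - x2)\<^sup>2"
    unfolding T_def c_def power_mult_distrib assms(6,7) by (simp add: power2_eq_square algebra_simps)
  then have "c\<^sup>2 \<le> T\<^sup>2"
    by (metis diff_ge_0_iff_ge zero_le_mult_iff zero_le_power2)
  then have "\<bar>c\<bar> \<le> T"
    using power2_le_imp_le[of "\<bar>c\<bar>" T] \<open>T \<ge> 0\<close> by simp
  then have "T + c \<ge> 0"
    by linarith
  have "h * \<bar>t\<bar> \<le> T - c"
    using assms(3) \<open>T \<ge> 0\<close> by (simp add: c_def)
  have "\<bar>t\<bar> * (h * (T + c)) = (h * \<bar>t\<bar>) * (T + c)"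
    by simp
  also have "\<dots> \<le> (T - c) * (T + c)"
    using \<open>h * \<bar>t\<bar> \<le> T - c\<close> \<open>T + c \<ge> 0\<close> by (rule mult_right_mono)
  also have "\<dots> = T\<^sup>2 - c\<^sup>2"
    by (simp add: power2_eq_square algebra_simps)
  also have "\<dots> = t\<^sup>2 * (x1 - x2)\<^sup>2"
    by (fact diff_squares)
  also have "\<dots> = \<bar>t\<bar> * (\<bar>t\<bar> * (x1 - x2)\<^sup>2)"
    by (metis abs_mult_self_eq mult.assoc power2_eq_square)
  finally have "h * (T + c) \<le> \<bar>t\<bar> * (x1 - x2)\<^sup>2"
    using assms(1) by simp
  moreover have "\<bar>t\<bar> * (r1 + r2)\<^sup>2 = 2 * \<bar>t\<bar> * (T + c) + \<bar>t\<bar> * (x1 - x2)\<^sup>2"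
    unfolding T_def c_def power2_sum assms(6,7) by (simp add: power2_eq_square algebra_simps)
  ultimately show ?thesis
    unfolding T_def[symmetric] c_def[symmetric] by (simp add: algebra_simps)
qed

lemma pstar_vertical_shift_le:
  fixes x1 x2 t h :: real and w :: complex
  assumes "t \<noteq> 0" "0 \<le> h" "x1 * x2 + t\<^sup>2 + h * \<bar>t\<bar> < 0" "Im w = t"
  defines "p \<equiv> pstar (Complex x1 t) (Complex x2 t)"
  shows "cmod (1 - (w + \<i> * of_real (sgn t * h)) * p) \<le> cmod (1 - w * p)"
proof -
  define r1 where "r1 = cmod (Complex x1 t)"
  define r2 where "r2 = cmod (Complex x2 t)"
  define e where "e = sgn t * h"
  have nz: "Complex x1 t \<noteq> 0" "Complex x2 t \<noteq> 0"
    using assms(1) by (simp_all add: complex_eq_iff)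
  then have "r1 > 0" "r2 > 0"
    by (simp_all add: r1_def r2_def)
  have Im_p: "Im p = - t / (r1 * r2)"
    unfolding p_def r1_def r2_def by (rule Im_pstar[OF nz]) simp_all
  have norm_p: "(cmod p)\<^sup>2 = 2 * (r1 * r2 + (x1 * x2 + t\<^sup>2)) / (r1 * r2 * (r1 + r2)\<^sup>2)"
    unfolding p_def r1_def r2_def norm_pstar_squared[OF nz] by (simp add: power2_eq_square)
  have "(h + 2 * \<bar>t\<bar>) * (cmod p)\<^sup>2
      = 2 * ((h + 2 * \<bar>t\<bar>) * (r1 * r2 + (x1 * x2 + t\<^sup>2))) / (r1 * r2 * (r1 + r2)\<^sup>2)"
    unfolding norm_p by simp
  also have "\<dots> \<le> 2 * (\<bar>t\<bar> * (r1 + r2)\<^sup>2) / (r1 * r2 * (r1 + r2)\<^sup>2)"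
    using assms(1-3) \<open>r1 > 0\<close> \<open>r2 > 0\<close>
    by (intro divide_right_mono mult_left_mono circumcircle_inequality)
       (simp_all add: r1_def r2_def cmod_power2)
  also have "\<dots> = 2 * \<bar>t\<bar> / (r1 * r2)"
    using \<open>r1 > 0\<close> \<open>r2 > 0\<close> by (simp add: field_simps)
  finally have "(h + 2 * \<bar>t\<bar>) * (cmod p)\<^sup>2 \<le> 2 * \<bar>t\<bar> / (r1 * r2)" .
  moreover have "e * (e * (cmod p)\<^sup>2 + 2 * Im p + 2 * (cmod p)\<^sup>2 * Im w)
      = h * ((h + 2 * \<bar>t\<bar>) * (cmod p)\<^sup>2 - 2 * \<bar>t\<bar> / (r1 * r2))"
    using assms(1,4) unfolding Im_p e_def
    by (cases "t > 0") (simp_all add: power2_eq_square algebra_simps)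
  ultimately have "e * (e * (cmod p)\<^sup>2 + 2 * Im p + 2 * (cmod p)\<^sup>2 * Im w) \<le> 0"
    using assms(2) by (simp add: mult_nonneg_nonpos)
  then have "(cmod (1 - (w + \<i> * of_real e) * p))\<^sup>2 \<le> (cmod (1 - w * p))\<^sup>2"
    unfolding norm_one_minus_vertical_shift_squared by simp
  then show ?thesis
    unfolding e_def by (rule power2_le_imp_le) simp
qed

lemma circum_interior_iff:
  "z \<in> circum_interior b1 b2 h \<longleftrightarrow> (b1 - Re z) * (b2 - Re z) + Im z * (Im z + h) < 0"
proof -
  have "z \<in> circum_interior b1 b2 h
      \<longleftrightarrow> sqrt (((b1 + b2) / 2 - Re z)\<^sup>2 + (- h / 2 - Im z)\<^sup>2) < sqrt (((b2 - b1)\<^sup>2 + h\<^sup>2) / 4)"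
    by (simp add: circum_interior_def dist_complex_def cmod_def real_sqrt_divide)
  moreover have "((b1 + b2) / 2 - Re z)\<^sup>2 + (- h / 2 - Im z)\<^sup>2 - ((b2 - b1)\<^sup>2 + h\<^sup>2) / 4
      = (b1 - Re z) * (b2 - Re z) + Im z * (Im z + h)"
    by (simp add: power2_eq_square field_simps)
  ultimately show ?thesis
    by (simp only: real_sqrt_less_iff) linarith
qed

lemma circum_interior_offset_ineq:
  assumes "Im z \<notin> {- h..0}" "z \<in> circum_interior b1 b2 h"
  defines "t \<equiv> if Im z > 0 then - Im z else - h - Im z"
  shows "(b1 - Re z) * (b2 - Re z) + t\<^sup>2 + h * \<bar>t\<bar> < 0"
proof -
  have "t\<^sup>2 + h * \<bar>t\<bar> = Im z * (Im z + h)"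
    using assms(1) by (auto simp: t_def power2_eq_square algebra_simps)
  then show ?thesis
    using assms(2) by (simp add: circum_interior_iff)
qed

lemma corners_eq_near_far:
  fixes b1 b2 h :: real and z :: complex
  assumes "Im z \<notin> {- h..0}"
  defines "t \<equiv> if Im z > 0 then - Im z else - h - Im z"
  defines "a1 \<equiv> Complex (b1 - Re z) t" and "a2 \<equiv> Complex (b2 - Re z) t"
  defines "e \<equiv> \<i> * of_real (sgn t * h)"
  shows "corners b1 b2 h = {z + a1, z + a2, z + (a1 + e), z + (a2 + e)}"
proof (cases "Im z > 0")
  case True
  then have "z + a1 = of_real b1" "z + a2 = of_real b2"
    "z + (a1 + e) = of_real b1 - \<i> * of_real h" "z + (a2 + e) = of_real b2 - \<i> * of_real h"
    by (simp_all add: a1_def a2_def e_def t_def complex_eq_iff)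
  then show ?thesis
    by (simp add: corners_def)
next
  case False
  with assms(1) have "Im z < - h"
    by auto
  then have "z + a1 = of_real b1 - \<i> * of_real h" "z + a2 = of_real b2 - \<i> * of_real h"
    "z + (a1 + e) = of_real b1" "z + (a2 + e) = of_real b2"
    using False by (simp_all add: a1_def a2_def e_def t_def complex_eq_iff)
  then show ?thesis
    by (auto simp: corners_def)
qed

lemma max_resid_rect_pstar:
  assumes "b1 \<le> b2" "0 \<le> h" "corners b1 b2 h = {z + a1, z + a2, z + c1, z + c2}"
    and "a1 \<noteq> 0" "a2 \<noteq> 0"
    and "cmod (1 - c1 * pstar a1 a2) \<le> cmod (1 - a1 * pstar a1 a2)"
    and "cmod (1 - c2 * pstar a1 a2) \<le> cmod (1 - a2 * pstar a1 a2)"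
  shows "max_resid z (rect b1 b2 h) (pstar a1 a2) = cmod (a1 - a2) / (cmod a1 + cmod a2)"
    and "max_resid z (rect b1 b2 h) (pstar a1 a2) \<le> max_resid z (rect b1 b2 h) p"
proof -
  have max_resid: "max_resid z (rect b1 b2 h) q
      = max (cmod (1 - a1 * q)) (max (cmod (1 - a2 * q)) (max (cmod (1 - c1 * q)) (cmod (1 - c2 * q))))" for q
    unfolding max_resid_rect_eq_Max_corners[OF assms(1,2)] assms(3) by (simp add: resid_poly_def)
  have "cmod (1 - a1 * pstar a1 a2) = cmod (a1 - a2) / (cmod a1 + cmod a2)"
    and "cmod (1 - a2 * pstar a1 a2) = cmod (a1 - a2) / (cmod a1 + cmod a2)"
    using norm_one_minus_mult_pstar[OF assms(4,5)] norm_one_minus_mult_pstar[OF assms(5,4)]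
    by (simp_all add: pstar_commute norm_minus_commute add.commute)
  with assms(6,7) show *: "max_resid z (rect b1 b2 h) (pstar a1 a2) = cmod (a1 - a2) / (cmod a1 + cmod a2)"
    unfolding max_resid by simp
  show "max_resid z (rect b1 b2 h) (pstar a1 a2) \<le> max_resid z (rect b1 b2 h) p"
    using max_norm_one_minus_mult_ge[of a1 a2 p] unfolding * max_resid[of p] by (auto simp: le_max_iff_disj)
qed

theorem theorem4p1:
  fixes b1 b2 h :: real and z :: complex
  assumes "b1 < b2" and "h > 0"
  shows "(\<forall>p. max_resid z (rect b1 b2 h) p = Max ((\<lambda>l. cmod (resid_poly z p l)) ` corners b1 b2 h))
       \<and> (INF p. max_resid z (rect b1 b2 h) p) = (INF p. max_resid z (corners b1 b2 h) p)
       \<and> (Im z \<notin> {- h..0} \<and> z \<in> circum_interior b1 b2 h \<longrightarrow>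
           (let a1 = (if Im z > 0 then complex_of_real b1 - z else complex_of_real b1 - \<i> * complex_of_real h - z);
                a2 = (if Im z > 0 then complex_of_real b2 - z else complex_of_real b2 - \<i> * complex_of_real h - z);
                pstar = (of_real (cmod a1) / a1 + of_real (cmod a2) / a2) / of_real (cmod a1 + cmod a2)
            in (\<forall>p. max_resid z (rect b1 b2 h) pstar \<le> max_resid z (rect b1 b2 h) p)
               \<and> max_resid z (rect b1 b2 h) pstar = cmod (a1 - a2) / (cmod a1 + cmod a2)))"
proof (intro conjI impI allI)
  have bh: "b1 \<le> b2" "0 \<le> h"
    using assms by simp_all
  show "max_resid z (rect b1 b2 h) p = Max ((\<lambda>l. cmod (resid_poly z p l)) ` corners b1 b2 h)" for p
    using max_resid_rect_eq_Max_corners[OF bh] .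
  then show "(INF p. max_resid z (rect b1 b2 h) p) = (INF p. max_resid z (corners b1 b2 h) p)"
    by (simp add: max_resid_corners_eq_Max)
  assume "Im z \<notin> {- h..0} \<and> z \<in> circum_interior b1 b2 h"
  then have off: "Im z \<notin> {- h..0}" and inside: "z \<in> circum_interior b1 b2 h"
    by simp_all
  define t where "t = (if Im z > 0 then - Im z else - h - Im z)"
  define a1 where "a1 = Complex (b1 - Re z) t"
  define a2 where "a2 = Complex (b2 - Re z) t"
  have "t \<noteq> 0"
    using off by (auto simp: t_def)
  then have "a1 \<noteq> 0" "a2 \<noteq> 0"
    by (simp_all add: a1_def a2_def complex_eq_iff)
  have near: "(if Im z > 0 then of_real b1 - z else of_real b1 - \<i> * of_real h - z) = a1"
    "(if Im z > 0 then of_real b2 - z else of_real b2 - \<i> * of_real h - z) = a2"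
    by (simp_all add: a1_def a2_def t_def complex_eq_iff)
  have circ: "(b1 - Re z) * (b2 - Re z) + t\<^sup>2 + h * \<bar>t\<bar> < 0"
    using circum_interior_offset_ineq[OF off inside] unfolding t_def .
  note far = pstar_vertical_shift_le[OF \<open>t \<noteq> 0\<close> bh(2) circ, folded a1_def a2_def]
  note optimal = max_resid_rect_pstar[OF bh corners_eq_near_far[OF off, of b1 b2, folded t_def a1_def a2_def]
      \<open>a1 \<noteq> 0\<close> \<open>a2 \<noteq> 0\<close> far far]
  show "let a1 = (if Im z > 0 then complex_of_real b1 - z else complex_of_real b1 - \<i> * complex_of_real h - z);
            a2 = (if Im z > 0 then complex_of_real b2 - z else complex_of_real b2 - \<i> * complex_of_real h - z);
            pstar = (of_real (cmod a1) / a1 + of_real (cmod a2) / a2) / of_real (cmod a1 + cmod a2)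
        in (\<forall>p. max_resid z (rect b1 b2 h) pstar \<le> max_resid z (rect b1 b2 h) p)
           \<and> max_resid z (rect b1 b2 h) pstar = cmod (a1 - a2) / (cmod a1 + cmod a2)"
    unfolding Let_def near pstar_def[symmetric] using optimal by (simp add: a1_def a2_def)
qed

end
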